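(* Let $\mathbb{M}$ be a depth-1 graded monad on a category $\mathcal{C}$ for which the functor $\overline{M}_1\colon\mathit{EM}(M_0)\to\mathit{EM}(M_0)$ exists. Then for every $\mathcal{C}$-morphism $f\colon X\to M_kY$, one has $\overline{M}_1(f^*_0)=f^*_1$, where $f^*_0\colon(M_0X,\mu^{0,0}_X)\to(M_kY,\mu^{0,k}_Y)$ is viewed as a homomorphism of $M_0$-algebras and $\overline{M}_1(M_0X,\mu^{0,0}_X)=(M_1X,\mu^{0,1}_X)$, $\overline{M}_1(M_kY,\mu^{0,k}_Y)=(M_{k+1}Y,\mu^{0,k+1}_Y)$.
   Context: A graded monad $\mathbb{M}$ on $\mathcal{C}$: functors $M_n$ ($n\in\mathbb{N}$), unit $\eta\colon\mathit{Id}\to M_0$, multiplications $\mu^{n,k}\colon M_nM_k\to M_{n+k}$ with $\mu^{0,n}\eta M_n=\mathit{id}=\mu^{n,0}M_n\eta$ and $\mu^{n+k,m}\mu^{n,k}M_m=\mu^{n,k+m}M_n\mu^{k,m}$. Depth-1: for all $n$, $\mu^{1,n}_X$ is a coequalizer of $\mu^{1,0}M_nX$ and $M_1\mu^{0,n}_X\colon M_1M_0M_nX\to M_1M_nX$. Graded Kleisli star: $f^*_n=\mu^{n,k}_Y\cdot M_nf\colon M_nX\to M_{n+k}Y$. A graded $M_1$-algebra is $(A_0,A_1,a^{0,0},a^{0,1},a^{1,0})$ with $a^{m,k}\colon M_mA_k\to A_{m+k}$ satisfying $a^{0,m}\eta_{A_m}=\mathit{id}$ and $a^{m+r,k}\mu^{m,r}_{A_k}=a^{m,r+k}M_ma^{r,k}$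 whenever defined; homomorphisms are pairs $(f_0,f_1)$ commuting with all structure maps. $M_0$-algebras are Eilenberg–Moore algebras of $(M_0,\eta,\mu^{0,0})$. $\overline{M}_1$ sends an $M_0$-algebra $A$ to $(A_1,a^{0,1})$ where $(A,A_1,\dots)$ is the free graded $M_1$-algebra with $0$-part $A$ (assumed to exist), and sends an $M_0$-homomorphism $h$ to the unique $h_1$ such that $(h,h_1)$ is an $M_1$-homomorphism between the free $M_1$-algebras; for algebras $(M_nX,\mu^{0,n})$ the free $M_1$-algebra is $(M_nX,M_{n+1}X,\mu^{0,n},\mu^{0,n+1},\mu^{1,n})$. *)

theory Defs
  imports Main
begin

record ('o, 'm) category =
  cdom  :: "'m \<Rightarrow> 'o"
  ccod  :: "'m \<Rightarrow> 'o"
  ccomp :: "'m \<Rightarrow> 'm \<Rightarrow> 'm"   (* ccomp C g f = g . f *)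
  cid   :: "'o \<Rightarrow> 'm"

definition hom :: "('o, 'm) category \<Rightarrow> 'o \<Rightarrow> 'o \<Rightarrow> 'm set" where
  "hom C A B = {f. cdom C f = A \<and> ccod C f = B}"

definition is_category :: "('o, 'm) category \<Rightarrow> bool" where
  "is_category C \<longleftrightarrow>
     (\<forall>A. cid C A \<in> hom C A A) \<and>
     (\<forall>f g. ccod C f = cdom C g \<longrightarrow> ccomp C g f \<in> hom C (cdom C f) (ccod C g)) \<and>
     (\<forall>f g h. ccod C f = cdom C g \<and> ccod C g = cdom C h \<longrightarrow>
        ccomp C h (ccomp C g f) = ccomp C (ccomp C h g) f) \<and>
     (\<forall>f. ccomp C f (cid C (cdom C f)) = f \<and> ccomp C (cid C (ccod C f)) f = f)"

definition is_endofunctor :: "('o, 'm) category \<Rightarrow> ('o \<Rightarrow> 'o) \<Rightarrow> ('m \<Rightarrow> 'm) \<Rightarrow> bool" where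
  "is_endofunctor C Fo Fm \<longleftrightarrow>
     (\<forall>f. Fm f \<in> hom C (Fo (cdom C f)) (Fo (ccod C f))) \<and>
     (\<forall>A. Fm (cid C A) = cid C (Fo A)) \<and>
     (\<forall>f g. ccod C f = cdom C g \<longrightarrow> Fm (ccomp C g f) = ccomp C (Fm g) (Fm f))"

definition is_coequalizer :: "('o, 'm) category \<Rightarrow> 'm \<Rightarrow> 'm \<Rightarrow> 'm \<Rightarrow> bool" where
  "is_coequalizer C f g e \<longleftrightarrow>
     cdom C f = cdom C g \<and> ccod C f = ccod C g \<and> cdom C e = ccod C f \<and>
     ccomp C e f = ccomp C e g \<and>
     (\<forall>h. cdom C h = ccod C f \<and> ccomp C h f = ccomp C h g \<longrightarrow>
        (\<exists>!u. u \<in> hom C (ccod C e) (ccod C h) \<and> ccomp C u e = h))"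

record ('o, 'm) gmonad =
  Mo   :: "nat \<Rightarrow> 'o \<Rightarrow> 'o"
  Mm   :: "nat \<Rightarrow> 'm \<Rightarrow> 'm"
  eta  :: "'o \<Rightarrow> 'm"
  mu   :: "nat \<Rightarrow> nat \<Rightarrow> 'o \<Rightarrow> 'm"

definition graded_monad :: "('o, 'm) category \<Rightarrow> ('o, 'm) gmonad \<Rightarrow> bool" where
  "graded_monad C M \<longleftrightarrow>
     is_category C \<and>
     (\<forall>n. is_endofunctor C (Mo M n) (Mm M n)) \<and>
     (\<forall>X. eta M X \<in> hom C X (Mo M 0 X)) \<and>
     (\<forall>f. ccomp C (Mm M 0 f) (eta M (cdom C f)) = ccomp C (eta M (ccod C f)) f) \<and>
     (\<forall>n k X. mu M n k X \<in> hom C (Mo M n (Mo M k X)) (Mo M (n + k) X)) \<and>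
     (\<forall>n k f. ccomp C (Mm M (n + k) f) (mu M n k (cdom C f))
              = ccomp C (mu M n k (ccod C f)) (Mm M n (Mm M k f))) \<and>
     (\<forall>n X. ccomp C (mu M 0 n X) (eta M (Mo M n X)) = cid C (Mo M n X)) \<and>
     (\<forall>n X. ccomp C (mu M n 0 X) (Mm M n (eta M X)) = cid C (Mo M n X)) \<and>
     (\<forall>n k m X. ccomp C (mu M (n + k) m X) (mu M n k (Mo M m X))
              = ccomp C (mu M n (k + m) X) (Mm M n (mu M k m X)))"

definition depth1 :: "('o, 'm) category \<Rightarrow> ('o, 'm) gmonad \<Rightarrow> bool" where
  "depth1 C M \<longleftrightarrow>
     (\<forall>n X. is_coequalizer C (mu M 1 0 (Mo M n X)) (Mm M 1 (mu M 0 n X)) (mu M 1 n X))"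

definition kstar :: "('o, 'm) category \<Rightarrow> ('o, 'm) gmonad \<Rightarrow> nat \<Rightarrow> nat \<Rightarrow> 'o \<Rightarrow> 'm \<Rightarrow> 'm" where
  "kstar C M n k Y f = ccomp C (mu M n k Y) (Mm M n f)"

definition is_M0_alg :: "('o, 'm) category \<Rightarrow> ('o, 'm) gmonad \<Rightarrow> 'o \<Rightarrow> 'm \<Rightarrow> bool" where
  "is_M0_alg C M A a \<longleftrightarrow>
     a \<in> hom C (Mo M 0 A) A \<and>
     ccomp C a (eta M A) = cid C A \<and>
     ccomp C a (mu M 0 0 A) = ccomp C a (Mm M 0 a)"

definition is_M0_hom :: "('o, 'm) category \<Rightarrow> ('o, 'm) gmonad \<Rightarrow> 'o \<times> 'm \<Rightarrow> 'o \<times> 'm \<Rightarrow> 'm \<Rightarrow> bool" where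
  "is_M0_hom C M Aa Bb h \<longleftrightarrow>
     h \<in> hom C (fst Aa) (fst Bb) \<and>
     ccomp C h (snd Aa) = ccomp C (snd Bb) (Mm M 0 h)"

text \<open>A graded M_1-algebra (A_0, A_1, a^{0,0}, a^{0,1}, a^{1,0}).\<close>
type_synonym ('o, 'm) m1alg = "'o \<times> 'o \<times> 'm \<times> 'm \<times> 'm"

definition is_M1_alg :: "('o, 'm) category \<Rightarrow> ('o, 'm) gmonad \<Rightarrow> ('o, 'm) m1alg \<Rightarrow> bool" where
  "is_M1_alg C M A \<longleftrightarrow> (case A of (A0, A1, a00, a01, a10) \<Rightarrow>
     a00 \<in> hom C (Mo M 0 A0) A0 \<and>
     a01 \<in> hom C (Mo M 0 A1) A1 \<and>
     a10 \<in> hom C (Mo M 1 A0) A1 \<and>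
     ccomp C a00 (eta M A0) = cid C A0 \<and>
     ccomp C a01 (eta M A1) = cid C A1 \<and>
     \<comment> \<open>(m,r,k) = (0,0,0)\<close>
     ccomp C a00 (mu M 0 0 A0) = ccomp C a00 (Mm M 0 a00) \<and>
     \<comment> \<open>(m,r,k) = (0,0,1)\<close>
     ccomp C a01 (mu M 0 0 A1) = ccomp C a01 (Mm M 0 a01) \<and>
     \<comment> \<open>(m,r,k) = (1,0,0)\<close>
     ccomp C a10 (mu M 1 0 A0) = ccomp C a10 (Mm M 1 a00) \<and>
     \<comment> \<open>(m,r,k) = (0,1,0)\<close>
     ccomp C a10 (mu M 0 1 A0) = ccomp C a01 (Mm M 0 a10))"

definition is_M1_hom :: "('o, 'm) category \<Rightarrow> ('o, 'm) gmonad \<Rightarrow> ('o, 'm) m1alg \<Rightarrow> ('o, 'm) m1alg \<Rightarrow> 'm \<Rightarrow> 'm \<Rightarrow> bool" where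
  "is_M1_hom C M A B f0 f1 \<longleftrightarrow> (case A of (A0, A1, a00, a01, a10) \<Rightarrow> case B of (B0, B1, b00, b01, b10) \<Rightarrow>
     f0 \<in> hom C A0 B0 \<and> f1 \<in> hom C A1 B1 \<and>
     ccomp C f0 a00 = ccomp C b00 (Mm M 0 f0) \<and>
     ccomp C f1 a01 = ccomp C b01 (Mm M 0 f1) \<and>
     ccomp C f1 a10 = ccomp C b10 (Mm M 1 f0))"

definition is_free_M1_alg :: "('o, 'm) category \<Rightarrow> ('o, 'm) gmonad \<Rightarrow> ('o, 'm) m1alg \<Rightarrow> bool" where
  "is_free_M1_alg C M A \<longleftrightarrow> is_M1_alg C M A \<and>
     (\<forall>B. is_M1_alg C M B \<longrightarrow>
        (\<forall>h. is_M0_hom C M (fst A, fst (snd (snd A))) (fst B, fst (snd (snd B))) h \<longrightarrow>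
           (\<exists>!h1. is_M1_hom C M A B h h1)))"

text \<open>The functor Mbar_1 exists: every M_0-algebra has a free graded M_1-algebra with that 0-part.\<close>
definition Mbar1_exists :: "('o, 'm) category \<Rightarrow> ('o, 'm) gmonad \<Rightarrow> bool" where
  "Mbar1_exists C M \<longleftrightarrow>
     (\<forall>A a. is_M0_alg C M A a \<longrightarrow> (\<exists>A1 a01 a10. is_free_M1_alg C M (A, A1, a, a01, a10)))"

text \<open>The free graded M_1-algebra on (M_n X, mu^{0,n}_X):
  (M_n X, M_{n+1} X, mu^{0,n}, mu^{0,n+1}, mu^{1,n}).\<close>
definition freeM1 :: "('o, 'm) gmonad \<Rightarrow> 'o \<Rightarrow> nat \<Rightarrow> ('o, 'm) m1alg" where
  "freeM1 M X n = (Mo M n X, Mo M (Suc n) X, mu M 0 n X, mu M 0 (Suc n) X, mu M 1 n X)"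

text \<open>Action of Mbar_1 on an M_0-homomorphism h between (the 0-parts of) free M_1-algebras A, B:
  the unique h_1 such that (h, h_1) is an M_1-homomorphism.\<close>
definition Mbar1_hom :: "('o, 'm) category \<Rightarrow> ('o, 'm) gmonad \<Rightarrow> ('o, 'm) m1alg \<Rightarrow> ('o, 'm) m1alg \<Rightarrow> 'm \<Rightarrow> 'm" where
  "Mbar1_hom C M A B h = (THE h1. is_M1_hom C M A B h h1)"

end

theory Submission
  imports Defs
begin

(* The pair (f*_0, f*_1) is a homomorphism of graded M_1-algebras, because the graded
   Kleisli star commutes with the multiplications by associativity of mu. Conversely, an
   M_1-homomorphism out of (M_0 X, M_1 X, mu^{0,0}, mu^{0,1}, mu^{1,0}) is determined by its
   0-part, since mu^{1,0}_X is split by M_1 eta_X. Hence the definite description Mbar1_hom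
   picks out f*_1. *)

context
  fixes C :: "('o, 'm) category" and M :: "('o, 'm) gmonad"
  assumes gm: "graded_monad C M"
begin

lemma category: "is_category C"
  using gm by (simp add: graded_monad_def)

lemma ccomp_dom [simp]: "ccod C f = cdom C g \<Longrightarrow> cdom C (ccomp C g f) = cdom C f"
  and ccomp_cod [simp]: "ccod C f = cdom C g \<Longrightarrow> ccod C (ccomp C g f) = ccod C g"
  using category unfolding is_category_def hom_def by auto

lemma ccomp_assoc:
  "ccod C f = cdom C g \<Longrightarrow> ccod C g = cdom C h \<Longrightarrow>
    ccomp C h (ccomp C g f) = ccomp C (ccomp C h g) f"
  using category unfolding is_category_def by blast

lemma ccomp_id_right: "ccomp C f (cid C (cdom C f)) = f"
  using category unfolding is_category_def by blast

lemma Mm_dom [simp]: "cdom C (Mm M n f) = Mo M n (cdom C f)"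
  and Mm_cod [simp]: "ccod C (Mm M n f) = Mo M n (ccod C f)"
  using gm unfolding graded_monad_def is_endofunctor_def hom_def by auto

lemma Mm_comp: "ccod C f = cdom C g \<Longrightarrow> Mm M n (ccomp C g f) = ccomp C (Mm M n g) (Mm M n f)"
  using gm unfolding graded_monad_def is_endofunctor_def by auto

lemma mu_dom [simp]: "cdom C (mu M n k X) = Mo M n (Mo M k X)"
  and mu_cod [simp]: "ccod C (mu M n k X) = Mo M (n + k) X"
  using gm unfolding graded_monad_def hom_def by auto

lemma eta_dom [simp]: "cdom C (eta M X) = X"
  and eta_cod [simp]: "ccod C (eta M X) = Mo M 0 X"
  using gm unfolding graded_monad_def hom_def by auto

lemma mu_natural:
  "ccomp C (Mm M (n + k) f) (mu M n k (cdom C f)) = ccomp C (mu M n k (ccod C f)) (Mm M n (Mm M k f))"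
  using gm unfolding graded_monad_def by blast

lemma mu_Mm_eta: "ccomp C (mu M n 0 X) (Mm M n (eta M X)) = cid C (Mo M n X)"
  using gm unfolding graded_monad_def by blast

lemma mu_assoc:
  "ccomp C (mu M (n + k) m X) (mu M n k (Mo M m X)) = ccomp C (mu M n (k + m) X) (Mm M n (mu M k m X))"
  using gm unfolding graded_monad_def by blast

lemma kstar_dom [simp]: "f \<in> hom C X (Mo M k Y) \<Longrightarrow> cdom C (kstar C M n k Y f) = Mo M n X"
  and kstar_cod [simp]: "f \<in> hom C X (Mo M k Y) \<Longrightarrow> ccod C (kstar C M n k Y f) = Mo M (n + k) Y"
  unfolding kstar_def hom_def by simp_all

lemma kstar_mu:
  assumes f: "f \<in> hom C X (Mo M k Y)"
  shows "ccomp C (kstar C M (m + n) k Y f) (mu M m n X)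
    = ccomp C (mu M m (n + k) Y) (Mm M m (kstar C M n k Y f))"
proof -
  have [simp]: "cdom C f = X" "ccod C f = Mo M k Y"
    using f by (simp_all add: hom_def)
  have "ccomp C (kstar C M (m + n) k Y f) (mu M m n X)
      = ccomp C (mu M (m + n) k Y) (ccomp C (Mm M (m + n) f) (mu M m n X))"
    unfolding kstar_def by (simp add: ccomp_assoc)
  also have "\<dots> = ccomp C (mu M (m + n) k Y) (ccomp C (mu M m n (Mo M k Y)) (Mm M m (Mm M n f)))"
    using mu_natural[of m n f] by simp
  also have "\<dots> = ccomp C (ccomp C (mu M (m + n) k Y) (mu M m n (Mo M k Y))) (Mm M m (Mm M n f))"
    by (simp add: ccomp_assoc)
  also have "\<dots> = ccomp C (ccomp C (mu M m (n + k) Y) (Mm M m (mu M n k Y))) (Mm M m (Mm M n f))"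
    by (simp add: mu_assoc)
  also have "\<dots> = ccomp C (mu M m (n + k) Y) (Mm M m (kstar C M n k Y f))"
    unfolding kstar_def by (simp add: ccomp_assoc Mm_comp)
  finally show ?thesis .
qed

lemma kstar_is_M1_hom:
  assumes f: "f \<in> hom C X (Mo M k Y)"
  shows "is_M1_hom C M (freeM1 M X n) (freeM1 M Y (n + k)) (kstar C M n k Y f) (kstar C M (Suc n) k Y f)"
  using kstar_mu[OF f, of 0 n] kstar_mu[OF f, of 0 "Suc n"] kstar_mu[OF f, of 1 n] f
  unfolding is_M1_hom_def freeM1_def by (simp add: hom_def)

lemma M1_hom_from_free0_determined:
  assumes "is_M1_hom C M (freeM1 M X 0) (B0, B1, b00, b01, b10) h h1"
  shows "h1 = ccomp C (ccomp C b10 (Mm M 1 h)) (Mm M 1 (eta M X))"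
proof -
  from assms have [simp]: "cdom C h1 = Mo M 1 X" "cdom C h = Mo M 0 X"
    and h1_mu: "ccomp C h1 (mu M 1 0 X) = ccomp C b10 (Mm M 1 h)"
    unfolding is_M1_hom_def freeM1_def by (auto simp: hom_def)
  have "h1 = ccomp C h1 (ccomp C (mu M 1 0 X) (Mm M 1 (eta M X)))"
    using ccomp_id_right[of h1] by (simp add: mu_Mm_eta)
  also have "\<dots> = ccomp C (ccomp C h1 (mu M 1 0 X)) (Mm M 1 (eta M X))"
    by (simp add: ccomp_assoc)
  finally show ?thesis
    unfolding h1_mu .
qed

lemma Mbar1_hom_free0_eqI:
  assumes "is_M1_hom C M (freeM1 M X 0) B h h1"
  shows "Mbar1_hom C M (freeM1 M X 0) B h = h1"
  unfolding Mbar1_hom_def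
proof (rule the_equality)
  show "is_M1_hom C M (freeM1 M X 0) B h h1"
    by (fact assms)
  fix h1'
  assume "is_M1_hom C M (freeM1 M X 0) B h h1'"
  with assms show "h1' = h1"
    by (cases B) (metis M1_hom_from_free0_determined)
qed

end

theorem lemma5:
  fixes C :: "('o, 'm) category" and M :: "('o, 'm) gmonad"
    and X Y :: 'o and k :: nat and f :: 'm
  assumes "graded_monad C M"
    and "depth1 C M"
    and "Mbar1_exists C M"
    and "f \<in> hom C X (Mo M k Y)"
  shows "Mbar1_hom C M (freeM1 M X 0) (freeM1 M Y k) (kstar C M 0 k Y f) = kstar C M 1 k Y f"
proof -
  have "is_M1_hom C M (freeM1 M X 0) (freeM1 M Y k) (kstar C M 0 k Y f) (kstar C M 1 k Y f)"
    using kstar_is_M1_hom[OF assms(1) assms(4), of 0] by simp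
  then show ?thesis
    by (rule Mbar1_hom_free0_eqI[OF assms(1)])
qed

end
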